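(* Under the model and standing assumption below, for every $n$, every admissible control $T^n\in\mathcal A^n$, and all $t\ge0$, one has $\hat W^n_t\ge\Gamma_1[\hat F^n](t)$.
   Context: Finite sets $\mathcal I$ (size $I$), $\mathcal K$ (size $K$), $\mathcal J\subset\mathcal I\times\mathcal K$ (size $J$); $\mathcal J_i=\{(i,k)\in\mathcal J\}$, $\mathcal J^k=\{(i,k)\in\mathcal J\}$. $\lambda_i,\mu_j\in(0,\infty)$; $R$ is $I\times J$ with $R_{ij}=\mu_j$ if $j\in\mathcal J_i$, else $0$; $G$ is $K\times J$ with $G_{kj}=1_{j\in\mathcal J^k}$. LP: minimize $\rho$ s.t. $R\xi=\lambda$, $G\xi\le\rho1_K$, $\xi\ge0$. Dual: maximize $y\cdot\lambda$ s.t. $\sum_kz_k=1$, $yR\le zG$, $z\ge0$. Standing assumption: LP optimal value $1$; every $\xi$ with $(\xi,1)$ optimal satisfies $(G\xi)_k=1$ for all $k$; the dual has a unique solution $(y^*,z^* )$. Model: rates $\lambda^n_i,\mu^n_j>0$ with $\hat\lambda^n_i:=n^{-1/2}(\lambda^n_i-n\lambda_i)\to\hat\lambda_i\in\mathbb R$, $\hat\mu^n_j:=n^{-1/2}(\mu^n_j-n\mu_j)\to\hat\mu_j\in\mathbb R$. Mutually independent renewal processes $\check A_i,\check S_j$ with right-continuous paths and IID strictly positive mean-1 interarrival times with finite squared coefficients of variation ($C^2_{A_i}>0$), and an independent random element $\Upsilon$ in a Polish space; $A^n_i(t)=\check A_i(\lambda^n_it)$, $S^n_j(t)=\check S_j(\mu^n_jt)$.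 An admissible control $T^n\in\mathcal A^n$ is a process $(T^n_j)_{j\in\mathcal J}$ with continuous nondecreasing $1$-Lipschitz paths, $T^n(0)=0$, such that with $D^n_j=S^n_j\circ T^n_j$, $X^n_i(t)=A^n_i(t)-\sum_{j\in\mathcal J_i}D^n_j(t)$, $I^n_k(t)=t-(GT^n(t))_k$, one has $X^n_i\ge0$, $I^n_k$ nondecreasing, and $T^n$ adapted to $\sigma\{A^n(s),D^n(s),s\le t;\Upsilon\}$. Define $\hat X^n=n^{-1/2}X^n$, $\hat W^n_t=y^*\cdot\hat X^n_t$, $\hat A^n_i(t)=n^{-1/2}(A^n_i(t)-\lambda^n_it)$, $\hat S^n_j(t)=n^{-1/2}(S^n_j(t)-\mu^n_jt)$, and $\hat F^n(t)=\sum_iy^*_i\big(\hat A^n_i(t)-\sum_{j\in\mathcal J_i}\hat S^n_j(T^n_j(t))+\hat\lambda^n_it-\sum_{j\in\mathcal J_i}\hat\mu^n_jT^n_j(t)\big)$. Skorohod map on the half line: for $\psi\in D_{\mathbb R}[0,\infty)$, $\Gamma_1[\psi](t)=\psi(t)+\sup_{0\le s\le t}\psi(s)^-$. *)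

theory Defs
  imports "HOL-Probability.Probability"
begin

text \<open>Index sets: the server-class sets are the finite types 'i and 'k;
  J is a subset of 'i \<times> 'k.  Vectors indexed by J are functions on 'i \<times> 'k
  of which only the values on J matter.\<close>

definition Rmat :: "('i \<times> 'k) set \<Rightarrow> ('i \<times> 'k \<Rightarrow> real) \<Rightarrow> 'i \<Rightarrow> 'i \<times> 'k \<Rightarrow> real" where
  "Rmat J mu i j = (if j \<in> J \<and> fst j = i then mu j else 0)"

definition Gmat :: "('i \<times> 'k) set \<Rightarrow> 'k \<Rightarrow> 'i \<times> 'k \<Rightarrow> real" where
  "Gmat J k j = (if j \<in> J \<and> snd j = k then 1 else 0)"

definition lp_feasible ::
  "('i \<times> 'k) set \<Rightarrow> ('i \<Rightarrow> real) \<Rightarrow> ('i \<times> 'k \<Rightarrow> real) \<Rightarrow> ('i \<times> 'k \<Rightarrow> real) \<Rightarrow> real \<Rightarrow> bool" where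
  "lp_feasible J lam mu xi rho \<longleftrightarrow>
     (\<forall>i. (\<Sum>j\<in>J. Rmat J mu i j * xi j) = lam i) \<and>
     (\<forall>k. (\<Sum>j\<in>J. Gmat J k j * xi j) \<le> rho) \<and>
     (\<forall>j\<in>J. 0 \<le> xi j)"

definition lp_value :: "('i \<times> 'k) set \<Rightarrow> ('i \<Rightarrow> real) \<Rightarrow> ('i \<times> 'k \<Rightarrow> real) \<Rightarrow> real" where
  "lp_value J lam mu = Inf {rho. \<exists>xi. lp_feasible J lam mu xi rho}"

definition lp_has_value :: "('i \<times> 'k) set \<Rightarrow> ('i \<Rightarrow> real) \<Rightarrow> ('i \<times> 'k \<Rightarrow> real) \<Rightarrow> real \<Rightarrow> bool" where
  "lp_has_value J lam mu v \<longleftrightarrow>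
     {rho. \<exists>xi. lp_feasible J lam mu xi rho} \<noteq> {} \<and>
     bdd_below {rho. \<exists>xi. lp_feasible J lam mu xi rho} \<and>
     lp_value J lam mu = v"

definition lp_optimal ::
  "('i \<times> 'k) set \<Rightarrow> ('i \<Rightarrow> real) \<Rightarrow> ('i \<times> 'k \<Rightarrow> real) \<Rightarrow> ('i \<times> 'k \<Rightarrow> real) \<Rightarrow> real \<Rightarrow> bool" where
  "lp_optimal J lam mu xi rho \<longleftrightarrow> lp_feasible J lam mu xi rho \<and> rho = lp_value J lam mu"

definition dual_feasible ::
  "('i::finite \<times> 'k::finite) set \<Rightarrow> ('i \<times> 'k \<Rightarrow> real) \<Rightarrow> ('i \<Rightarrow> real) \<Rightarrow> ('k \<Rightarrow> real) \<Rightarrow> bool" where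
  "dual_feasible J mu y z \<longleftrightarrow>
     (\<Sum>k\<in>UNIV. z k) = 1 \<and>
     (\<forall>j\<in>J. (\<Sum>i\<in>UNIV. y i * Rmat J mu i j) \<le> (\<Sum>k\<in>UNIV. z k * Gmat J k j)) \<and>
     (\<forall>k. 0 \<le> z k)"

definition dual_optimal ::
  "('i::finite \<times> 'k::finite) set \<Rightarrow> ('i \<Rightarrow> real) \<Rightarrow> ('i \<times> 'k \<Rightarrow> real) \<Rightarrow> ('i \<Rightarrow> real) \<Rightarrow> ('k \<Rightarrow> real) \<Rightarrow> bool" where
  "dual_optimal J lam mu y z \<longleftrightarrow>
     dual_feasible J mu y z \<and>
     (\<forall>y' z'. dual_feasible J mu y' z' \<longrightarrow> (\<Sum>i\<in>UNIV. y' i * lam i) \<le> (\<Sum>i\<in>UNIV. y i * lam i))"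

definition standing_assumption ::
  "('i::finite \<times> 'k::finite) set \<Rightarrow> ('i \<Rightarrow> real) \<Rightarrow> ('i \<times> 'k \<Rightarrow> real) \<Rightarrow> bool" where
  "standing_assumption J lam mu \<longleftrightarrow>
     lp_has_value J lam mu 1 \<and>
     (\<forall>xi. lp_optimal J lam mu xi 1 \<longrightarrow> (\<forall>k. (\<Sum>j\<in>J. Gmat J k j * xi j) = 1)) \<and>
     (\<exists>!yz. dual_optimal J lam mu (fst yz) (snd yz))"

definition renewal_set :: "(nat \<Rightarrow> real) \<Rightarrow> real \<Rightarrow> nat set" where
  "renewal_set u t = {m. 1 \<le> m \<and> (\<Sum>l=1..m. u l) \<le> t}"

definition renewal_process :: "'a measure \<Rightarrow> (real \<Rightarrow> 'a \<Rightarrow> real) \<Rightarrow> (nat \<Rightarrow> 'a \<Rightarrow> real) \<Rightarrow> bool" where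
  "renewal_process M N u \<longleftrightarrow>
     prob_space.indep_vars M (\<lambda>_. borel) u {1..} \<and>
     (\<forall>m\<ge>1. distr M borel (u m) = distr M borel (u 1)) \<and>
     (\<forall>m\<ge>1. \<forall>\<omega>\<in>space M. 0 < u m \<omega>) \<and>
     integrable M (u 1) \<and> (\<integral>\<omega>. u 1 \<omega> \<partial>M) = 1 \<and>
     integrable M (\<lambda>\<omega>. (u 1 \<omega>)\<^sup>2) \<and>
     (\<forall>\<omega>\<in>space M. \<forall>t\<ge>0. finite (renewal_set (\<lambda>l. u l \<omega>) t) \<and>
                              N t \<omega> = real (card (renewal_set (\<lambda>l. u l \<omega>) t))) \<and>
     (\<forall>\<omega>\<in>space M. \<forall>t\<ge>0. continuous (at_right t) (\<lambda>s. N s \<omega>))"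

definition scv :: "'a measure \<Rightarrow> ('a \<Rightarrow> real) \<Rightarrow> real" where
  "scv M X = (\<integral>\<omega>. (X \<omega> - (\<integral>\<omega>'. X \<omega>' \<partial>M))\<^sup>2 \<partial>M) / (\<integral>\<omega>. X \<omega> \<partial>M)\<^sup>2"

definition proc_events :: "'a measure \<Rightarrow> (real \<Rightarrow> 'a \<Rightarrow> real) \<Rightarrow> 'a set set" where
  "proc_events M N = sigma_sets (space M) {N t -` B \<inter> space M | t B. 0 \<le> t \<and> B \<in> sets borel}"

definition elem_events :: "'a measure \<Rightarrow> ('a \<Rightarrow> 'u::topological_space) \<Rightarrow> 'a set set" where
  "elem_events M Y = sigma_sets (space M) {Y -` B \<inter> space M | B. B \<in> sets borel}"

datatype ('i, 'k) source = ArrSrc 'i | SrvSrc "'i \<times> 'k" | UpsSrc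

definition source_events ::
  "'a measure \<Rightarrow> ('i \<Rightarrow> real \<Rightarrow> 'a \<Rightarrow> real) \<Rightarrow> ('i \<times> 'k \<Rightarrow> real \<Rightarrow> 'a \<Rightarrow> real) \<Rightarrow> ('a \<Rightarrow> 'u::topological_space)
   \<Rightarrow> ('i, 'k) source \<Rightarrow> 'a set set" where
  "source_events M A S Y s = (case s of ArrSrc i \<Rightarrow> proc_events M (A i)
                                       | SrvSrc j \<Rightarrow> proc_events M (S j)
                                       | UpsSrc \<Rightarrow> elem_events M Y)"

definition An :: "('i \<Rightarrow> real \<Rightarrow> 'a \<Rightarrow> real) \<Rightarrow> ('i \<Rightarrow> real) \<Rightarrow> 'i \<Rightarrow> real \<Rightarrow> 'a \<Rightarrow> real" where
  "An Ac lamn i t \<omega> = Ac i (lamn i * t) \<omega>"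

definition Sn :: "('j \<Rightarrow> real \<Rightarrow> 'a \<Rightarrow> real) \<Rightarrow> ('j \<Rightarrow> real) \<Rightarrow> 'j \<Rightarrow> real \<Rightarrow> 'a \<Rightarrow> real" where
  "Sn Sc mun j t \<omega> = Sc j (mun j * t) \<omega>"

definition Dn :: "('j \<Rightarrow> real \<Rightarrow> 'a \<Rightarrow> real) \<Rightarrow> ('j \<Rightarrow> real) \<Rightarrow> ('j \<Rightarrow> real \<Rightarrow> 'a \<Rightarrow> real) \<Rightarrow> 'j \<Rightarrow> real \<Rightarrow> 'a \<Rightarrow> real" where
  "Dn Sc mun T j t \<omega> = Sn Sc mun j (T j t \<omega>) \<omega>"

definition Xn ::
  "('i \<times> 'k) set \<Rightarrow> ('i \<Rightarrow> real \<Rightarrow> 'a \<Rightarrow> real) \<Rightarrow> ('i \<times> 'k \<Rightarrow> real \<Rightarrow> 'a \<Rightarrow> real) \<Rightarrow> ('i \<Rightarrow> real) \<Rightarrow> ('i \<times> 'k \<Rightarrow> real)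
   \<Rightarrow> ('i \<times> 'k \<Rightarrow> real \<Rightarrow> 'a \<Rightarrow> real) \<Rightarrow> 'i \<Rightarrow> real \<Rightarrow> 'a \<Rightarrow> real" where
  "Xn J Ac Sc lamn mun T i t \<omega> = An Ac lamn i t \<omega> - (\<Sum>j\<in>{j\<in>J. fst j = i}. Dn Sc mun T j t \<omega>)"

definition In :: "('i \<times> 'k) set \<Rightarrow> ('i \<times> 'k \<Rightarrow> real \<Rightarrow> 'a \<Rightarrow> real) \<Rightarrow> 'k \<Rightarrow> real \<Rightarrow> 'a \<Rightarrow> real" where
  "In J T k t \<omega> = t - (\<Sum>j\<in>J. Gmat J k j * T j t \<omega>)"

definition info :: "'a measure \<Rightarrow> ('i \<times> 'k) set \<Rightarrow> ('i \<Rightarrow> real \<Rightarrow> 'a \<Rightarrow> real) \<Rightarrow> ('i \<times> 'k \<Rightarrow> real \<Rightarrow> 'a \<Rightarrow> real)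
   \<Rightarrow> ('a \<Rightarrow> 'u::topological_space) \<Rightarrow> real \<Rightarrow> 'a measure" where
  "info M J A D Y t = sigma (space M)
     ({A i s -` B \<inter> space M | i s B. 0 \<le> s \<and> s \<le> t \<and> B \<in> sets borel} \<union>
      {D j s -` B \<inter> space M | j s B. j \<in> J \<and> 0 \<le> s \<and> s \<le> t \<and> B \<in> sets borel} \<union>
      {Y -` B \<inter> space M | B. B \<in> sets borel})"

definition admissible ::
  "'a measure \<Rightarrow> ('i \<times> 'k) set \<Rightarrow> ('i \<Rightarrow> real \<Rightarrow> 'a \<Rightarrow> real) \<Rightarrow> ('i \<times> 'k \<Rightarrow> real \<Rightarrow> 'a \<Rightarrow> real)
   \<Rightarrow> ('a \<Rightarrow> 'u::topological_space) \<Rightarrow> ('i \<Rightarrow> real) \<Rightarrow> ('i \<times> 'k \<Rightarrow> real)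
   \<Rightarrow> ('i \<times> 'k \<Rightarrow> real \<Rightarrow> 'a \<Rightarrow> real) \<Rightarrow> bool" where
  "admissible M J Ac Sc Y lamn mun T \<longleftrightarrow>
     (\<forall>\<omega>\<in>space M. \<forall>j\<in>J.
        T j 0 \<omega> = 0 \<and>
        continuous_on {0..} (\<lambda>t. T j t \<omega>) \<and>
        mono_on {0..} (\<lambda>t. T j t \<omega>) \<and>
        (\<forall>s\<ge>0. \<forall>t\<ge>0. \<bar>T j t \<omega> - T j s \<omega>\<bar> \<le> \<bar>t - s\<bar>)) \<and>
     (\<forall>\<omega>\<in>space M. \<forall>i. \<forall>t\<ge>0. 0 \<le> Xn J Ac Sc lamn mun T i t \<omega>) \<and>
     (\<forall>\<omega>\<in>space M. \<forall>k. mono_on {0..} (\<lambda>t. In J T k t \<omega>)) \<and>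
     (\<forall>j\<in>J. \<forall>t\<ge>0. T j t \<in> borel_measurable (info M J (An Ac lamn) (Dn Sc mun T) Y t))"

definition Xhat ::
  "nat \<Rightarrow> ('i \<times> 'k) set \<Rightarrow> ('i \<Rightarrow> real \<Rightarrow> 'a \<Rightarrow> real) \<Rightarrow> ('i \<times> 'k \<Rightarrow> real \<Rightarrow> 'a \<Rightarrow> real) \<Rightarrow> ('i \<Rightarrow> real) \<Rightarrow> ('i \<times> 'k \<Rightarrow> real)
   \<Rightarrow> ('i \<times> 'k \<Rightarrow> real \<Rightarrow> 'a \<Rightarrow> real) \<Rightarrow> 'i \<Rightarrow> real \<Rightarrow> 'a \<Rightarrow> real" where
  "Xhat n J Ac Sc lamn mun T i t \<omega> = Xn J Ac Sc lamn mun T i t \<omega> / sqrt (real n)"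

definition What ::
  "nat \<Rightarrow> ('i::finite \<Rightarrow> real) \<Rightarrow> ('i \<times> 'k) set \<Rightarrow> ('i \<Rightarrow> real \<Rightarrow> 'a \<Rightarrow> real) \<Rightarrow> ('i \<times> 'k \<Rightarrow> real \<Rightarrow> 'a \<Rightarrow> real)
   \<Rightarrow> ('i \<Rightarrow> real) \<Rightarrow> ('i \<times> 'k \<Rightarrow> real) \<Rightarrow> ('i \<times> 'k \<Rightarrow> real \<Rightarrow> 'a \<Rightarrow> real) \<Rightarrow> real \<Rightarrow> 'a \<Rightarrow> real" where
  "What n y J Ac Sc lamn mun T t \<omega> = (\<Sum>i\<in>UNIV. y i * Xhat n J Ac Sc lamn mun T i t \<omega>)"

definition Ahat :: "nat \<Rightarrow> ('i \<Rightarrow> real \<Rightarrow> 'a \<Rightarrow> real) \<Rightarrow> ('i \<Rightarrow> real) \<Rightarrow> 'i \<Rightarrow> real \<Rightarrow> 'a \<Rightarrow> real" where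
  "Ahat n Ac lamn i t \<omega> = (An Ac lamn i t \<omega> - lamn i * t) / sqrt (real n)"

definition Shat :: "nat \<Rightarrow> ('j \<Rightarrow> real \<Rightarrow> 'a \<Rightarrow> real) \<Rightarrow> ('j \<Rightarrow> real) \<Rightarrow> 'j \<Rightarrow> real \<Rightarrow> 'a \<Rightarrow> real" where
  "Shat n Sc mun j t \<omega> = (Sn Sc mun j t \<omega> - mun j * t) / sqrt (real n)"

definition ratehat :: "nat \<Rightarrow> real \<Rightarrow> real \<Rightarrow> real" where
  "ratehat n rn r = (rn - real n * r) / sqrt (real n)"

definition Fhat ::
  "nat \<Rightarrow> ('i::finite \<Rightarrow> real) \<Rightarrow> ('i \<times> 'k) set \<Rightarrow> ('i \<Rightarrow> real) \<Rightarrow> ('i \<times> 'k \<Rightarrow> real)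
   \<Rightarrow> ('i \<Rightarrow> real \<Rightarrow> 'a \<Rightarrow> real) \<Rightarrow> ('i \<times> 'k \<Rightarrow> real \<Rightarrow> 'a \<Rightarrow> real) \<Rightarrow> ('i \<Rightarrow> real) \<Rightarrow> ('i \<times> 'k \<Rightarrow> real)
   \<Rightarrow> ('i \<times> 'k \<Rightarrow> real \<Rightarrow> 'a \<Rightarrow> real) \<Rightarrow> real \<Rightarrow> 'a \<Rightarrow> real" where
  "Fhat n y J lam mu Ac Sc lamn mun T t \<omega> =
     (\<Sum>i\<in>UNIV. y i *
        (Ahat n Ac lamn i t \<omega>
         - (\<Sum>j\<in>{j\<in>J. fst j = i}. Shat n Sc mun j (T j t \<omega>) \<omega>)
         + ratehat n (lamn i) (lam i) * t
         - (\<Sum>j\<in>{j\<in>J. fst j = i}. ratehat n (mun j) (mu j) * T j t \<omega>)))"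

definition Gamma1 :: "(real \<Rightarrow> real) \<Rightarrow> real \<Rightarrow> real" where
  "Gamma1 psi t = psi t + (SUP s\<in>{0..t}. max 0 (- psi s))"

end

theory Submission imports Defs "HOL-Analysis.Cartesian_Euclidean_Space" begin

(*
  Pairing the queue-length balance with the dual optimum y* gives
  F^n = W^n - sqrt n * Y with Y(t) = (y* . lambda) t - y* R T(t).  Dual feasibility
  y* R <= z* G, the monotonicity of the idle times t 1 - G T and sum z* = 1 give
  y* R (T(t) - T(s)) <= t - s, so Y is nondecreasing from Y(0) = 0 once y* . lambda >= 1;
  that bound is strong duality for the LP, obtained from a separating hyperplane.
  Finally W^n >= 0 since X^n >= 0 and y* >= 0, and a nonnegative path of the form
  F + (nondecreasing from 0) dominates Gamma_1[F], by minimality of the Skorohod map.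
*)

lemma minimax_convex_coordinates:
  fixes C :: "(real^'k) set"
  assumes convex: "convex C" and nonempty: "C \<noteq> {}"
    and above: "\<And>c. c \<in> C \<Longrightarrow> \<exists>k. r < c $ k"
  obtains w :: "'k \<Rightarrow> real" where "\<And>k. 0 \<le> w k" "(\<Sum>k\<in>UNIV. w k) = 1"
    "\<And>c. c \<in> C \<Longrightarrow> r \<le> (\<Sum>k\<in>UNIV. w k * c $ k)"
proof -
  \<comment> \<open>Separate 0 from C + orthant - r 1; the normal is nonnegative because this set is
     closed under adding the orthant, and normalised it is the weight w.\<close>
  define p :: "real^'k" where "p = (\<chi> k. r)"
  define orthant where "orthant = {v :: real^'k. \<forall>k. 0 \<le> v $ k}"
  define S where "S = (\<lambda>x. x - p) ` (\<Union>c\<in>C. \<Union>v\<in>orthant. {c + v})"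
  have "convex orthant"
    unfolding orthant_def by (rule convex_box_cart) (simp add: atLeast_def[symmetric])
  then have "convex S"
    unfolding S_def by (intro convex_translation_subtract convex_sums convex)
  moreover have "0 \<notin> S"
  proof
    assume "0 \<in> S"
    then obtain c v where "c \<in> C" "v \<in> orthant" "c + v = p" unfolding S_def by auto
    have "c $ k \<le> r" for k
    proof -
      have "c $ k + v $ k = r" using \<open>c + v = p\<close> by (simp add: p_def flip: vector_add_component)
      moreover have "0 \<le> v $ k" using \<open>v \<in> orthant\<close> by (simp add: orthant_def)
      ultimately show ?thesis by linarith
    qed
    then show False using above[OF \<open>c \<in> C\<close>] by (auto simp: not_less[symmetric])
  qed
  ultimately obtain a where "a \<noteq> 0" and a: "\<And>x. x \<in> S \<Longrightarrow> 0 \<le> inner a x"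
    using separating_hyperplane_set_0 by blast
  obtain c0 where c0: "c0 \<in> C" using nonempty by blast
  have shifted: "0 \<le> inner a (c - p) + inner a v" if "c \<in> C" "v \<in> orthant" for c v
  proof -
    have "c + v - p \<in> S" using that unfolding S_def by blast
    then have "0 \<le> inner a (c + v - p)" by (rule a)
    then show ?thesis by (simp add: inner_diff_right inner_add_right)
  qed
  have a_nonneg: "0 \<le> a $ k" for k
  proof (rule ccontr)
    assume "\<not> 0 \<le> a $ k"
    define s where "s = (\<bar>inner a (c0 - p)\<bar> + 1) / - (a $ k)"
    have "s * a $ k = - (\<bar>inner a (c0 - p)\<bar> + 1)" and "0 < s"
      using \<open>\<not> 0 \<le> a $ k\<close> by (auto simp: s_def field_simps)
    moreover have "0 \<le> inner a (c0 - p) + inner a (s *\<^sub>R axis k 1)"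
      using shifted[OF c0, of "s *\<^sub>R axis k 1"] \<open>0 < s\<close> by (auto simp: orthant_def axis_def)
    ultimately show False by (simp add: inner_axis)
  qed
  define total where "total = (\<Sum>k\<in>UNIV. a $ k)"
  have "0 < total"
  proof -
    obtain k0 where "a $ k0 \<noteq> 0" using \<open>a \<noteq> 0\<close> by (metis vec_eq_iff zero_index)
    moreover have "a $ k0 \<le> total"
      unfolding total_def by (rule member_le_sum) (simp_all add: a_nonneg)
    ultimately show ?thesis using a_nonneg[of k0] by linarith
  qed
  define w where "w k = a $ k / total" for k
  show ?thesis
  proof
    show "0 \<le> w k" for k using a_nonneg[of k] \<open>0 < total\<close> by (simp add: w_def)
    show "(\<Sum>k\<in>UNIV. w k) = 1" using \<open>0 < total\<close> by (simp add: w_def total_def sum_divide_distrib[symmetric])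
    fix c assume "c \<in> C"
    then have "0 \<le> inner a (c - p)" using shifted[of c 0] by (simp add: orthant_def)
    then have "r * total \<le> (\<Sum>k\<in>UNIV. a $ k * c $ k)"
      by (simp add: inner_vec_def p_def total_def sum_subtractf sum_distrib_left algebra_simps)
    then show "r \<le> (\<Sum>k\<in>UNIV. w k * c $ k)"
      using \<open>0 < total\<close> by (simp add: w_def sum_divide_distrib[symmetric] pos_le_divide_eq)
  qed
qed

lemma sum_Rmat:
  fixes J :: "('i::finite \<times> 'k) set"
  assumes "j \<in> J"
  shows "(\<Sum>i\<in>UNIV. y i * Rmat J mu i j) = y (fst j) * mu j"
proof -
  have "(\<Sum>i\<in>UNIV. y i * Rmat J mu i j) = (\<Sum>i\<in>UNIV. if fst j = i then y (fst j) * mu j else 0)"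
    by (rule sum.cong) (auto simp: Rmat_def assms)
  then show ?thesis by simp
qed

lemma sum_Gmat:
  fixes J :: "('i \<times> 'k::finite) set"
  assumes "j \<in> J"
  shows "(\<Sum>k\<in>UNIV. z k * Gmat J k j) = z (snd j)"
proof -
  have "(\<Sum>k\<in>UNIV. z k * Gmat J k j) = (\<Sum>k\<in>UNIV. if snd j = k then z (snd j) else 0)"
    by (rule sum.cong) (auto simp: Gmat_def assms)
  then show ?thesis by simp
qed

lemma dual_feasible_iff:
  "dual_feasible J mu y z \<longleftrightarrow>
     (\<Sum>k\<in>UNIV. z k) = 1 \<and> (\<forall>j\<in>J. y (fst j) * mu j \<le> z (snd j)) \<and> (\<forall>k. 0 \<le> z k)"
  by (simp add: dual_feasible_def sum_Rmat sum_Gmat)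

lemma dual_optimal_nonneg:
  assumes lam_pos: "\<And>i. 0 < lam i" and opt: "dual_optimal J lam mu y z"
  shows "0 \<le> y i"
proof (rule ccontr)
  assume "\<not> 0 \<le> y i"
  then have neg: "y i * lam i < 0" using lam_pos[of i] by (simp add: mult_neg_pos)
  have feas: "dual_feasible J mu y z" using opt unfolding dual_optimal_def by simp
  have "(y(i := 0)) (fst j) * mu j \<le> z (snd j)" if "j \<in> J" for j
    using feas that unfolding dual_feasible_iff by (cases "fst j = i") auto
  then have "dual_feasible J mu (y(i := 0)) z"
    using feas unfolding dual_feasible_iff by blast
  then have "(\<Sum>i'\<in>UNIV. (y(i := 0)) i' * lam i') \<le> (\<Sum>i'\<in>UNIV. y i' * lam i')"
    using opt unfolding dual_optimal_def by blast
  moreover have "(\<Sum>i'\<in>UNIV. (y(i := 0)) i' * lam i') = (\<Sum>i'\<in>UNIV. y i' * lam i') - y i * lam i"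
    by (simp add: sum.remove[of UNIV i] algebra_simps)
  ultimately show False using neg by linarith
qed

definition routing :: "('i \<times> 'k) set \<Rightarrow> ('i \<Rightarrow> real) \<Rightarrow> ('i \<times> 'k \<Rightarrow> real) \<Rightarrow> ('i \<times> 'k \<Rightarrow> real) \<Rightarrow> bool" where
  "routing J lam mu \<xi> \<longleftrightarrow> (\<forall>i. (\<Sum>j\<in>J. Rmat J mu i j * \<xi> j) = lam i) \<and> (\<forall>j\<in>J. 0 \<le> \<xi> j)"

definition load :: "('i \<times> 'k) set \<Rightarrow> ('i \<times> 'k \<Rightarrow> real) \<Rightarrow> 'k \<Rightarrow> real" where
  "load J \<xi> k = (\<Sum>j\<in>J. Gmat J k j * \<xi> j)"

lemma lp_feasible_iff_routing:
  "lp_feasible J lam mu \<xi> \<rho> \<longleftrightarrow> routing J lam mu \<xi> \<and> (\<forall>k. load J \<xi> k \<le> \<rho>)"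
  unfolding lp_feasible_def routing_def load_def by blast

lemma weighted_load:
  fixes J :: "('i \<times> 'k::finite) set"
  assumes "finite J"
  shows "(\<Sum>k\<in>UNIV. w k * load J \<xi> k) = (\<Sum>j\<in>J. w (snd j) * \<xi> j)"
proof -
  have "(\<Sum>k\<in>UNIV. w k * load J \<xi> k) = (\<Sum>j\<in>J. (\<Sum>k\<in>UNIV. w k * Gmat J k j) * \<xi> j)"
    unfolding load_def sum_distrib_left sum_distrib_right mult.assoc by (rule sum.swap)
  also have "\<dots> = (\<Sum>j\<in>J. w (snd j) * \<xi> j)"
    by (rule sum.cong) (simp_all add: sum_Gmat)
  finally show ?thesis .
qed

lemma routing_serves:
  assumes "routing J lam mu \<xi>" and "0 < lam i"
  shows "\<exists>k. (i, k) \<in> J"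
proof (rule ccontr)
  assume "\<not> ?thesis"
  then have "Rmat J mu i j = 0" if "j \<in> J" for j using that by (cases j) (auto simp: Rmat_def)
  then have "(\<Sum>j\<in>J. Rmat J mu i j * \<xi> j) = 0" by simp
  then show False using assms by (simp add: routing_def)
qed

lemma cheapest_routing:
  fixes J :: "('i::finite \<times> 'k::finite) set"
  assumes mu_pos: "\<And>j. j \<in> J \<Longrightarrow> 0 < mu j"
    and lam_nonneg: "\<And>i. 0 \<le> lam i"
    and served: "\<And>i. \<exists>k. (i, k) \<in> J"
    and w_nonneg: "\<And>k. 0 \<le> w k" and w_sum: "(\<Sum>k\<in>UNIV. w k) = 1"
  obtains y \<xi> where "dual_feasible J mu y w" "routing J lam mu \<xi>"
    "(\<Sum>k\<in>UNIV. w k * load J \<xi> k) = (\<Sum>i\<in>UNIV. y i * lam i)"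
proof -
  define cost where "cost i k = w k / mu (i, k)" for i k
  define best where "best i = arg_min_on (cost i) {k. (i, k) \<in> J}" for i
  have best_in: "(i, best i) \<in> J" for i
    using arg_min_if_finite(1)[of "{k. (i, k) \<in> J}" "cost i"] served[of i]
    unfolding best_def by auto
  have best_le: "cost i (best i) \<le> cost i k" if "(i, k) \<in> J" for i k
    using arg_min_least[of "{k. (i, k) \<in> J}" k "cost i"] that unfolding best_def by auto
  define y where "y i = cost i (best i)" for i
  define \<xi> where "\<xi> j = (if snd j = best (fst j) then lam (fst j) / mu j else 0)" for j
  have "dual_feasible J mu y w"
    unfolding dual_feasible_iff
  proof (intro conjI ballI allI w_sum w_nonneg)
    fix j assume j: "j \<in> J"
    then have "y (fst j) \<le> w (snd j) / mu j" using best_le[of "fst j" "snd j"] by (simp add: y_def cost_def)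
    then show "y (fst j) * mu j \<le> w (snd j)" using mu_pos[OF j] by (simp add: pos_le_divide_eq)
  qed
  moreover have "routing J lam mu \<xi>"
    unfolding routing_def
  proof (intro conjI allI ballI)
    fix i
    have "(\<Sum>j\<in>J. Rmat J mu i j * \<xi> j) = (\<Sum>j\<in>J. if j = (i, best i) then lam i else 0)"
      by (rule sum.cong) (auto simp: Rmat_def \<xi>_def dest: mu_pos)
    also have "\<dots> = lam i" using best_in[of i] by simp
    finally show "(\<Sum>j\<in>J. Rmat J mu i j * \<xi> j) = lam i" .
  next
    fix j assume "j \<in> J" then show "0 \<le> \<xi> j"
      using lam_nonneg mu_pos by (simp add: \<xi>_def less_imp_le)
  qed
  moreover have "(\<Sum>k\<in>UNIV. w k * load J \<xi> k) = (\<Sum>i\<in>UNIV. y i * lam i)"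
  proof -
    have "(\<Sum>k\<in>UNIV. w k * load J \<xi> k) = (\<Sum>j\<in>J. w (snd j) * \<xi> j)"
      by (simp add: weighted_load)
    also have "\<dots> = (\<Sum>j\<in>range (\<lambda>i. (i, best i)). w (snd j) * \<xi> j)"
      by (rule sum.mono_neutral_cong_right) (auto simp: best_in \<xi>_def)
    also have "\<dots> = (\<Sum>i\<in>UNIV. y i * lam i)"
      by (subst sum.reindex) (auto simp: inj_on_def \<xi>_def y_def cost_def)
    finally show ?thesis .
  qed
  ultimately show ?thesis using that by blast
qed

lemma convex_load_image:
  "convex ((\<lambda>\<xi>. \<chi> k. load J \<xi> k) ` {\<xi>. routing J lam mu \<xi>})"
proof (rule convexI)
  fix c1 c2 and u v :: real
  assume "c1 \<in> (\<lambda>\<xi>. \<chi> k. load J \<xi> k) ` {\<xi>. routing J lam mu \<xi>}"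
    and "c2 \<in> (\<lambda>\<xi>. \<chi> k. load J \<xi> k) ` {\<xi>. routing J lam mu \<xi>}"
    and uv: "0 \<le> u" "0 \<le> v" "u + v = 1"
  then obtain \<xi>1 \<xi>2 where \<xi>: "routing J lam mu \<xi>1" "routing J lam mu \<xi>2"
    and c: "c1 = (\<chi> k. load J \<xi>1 k)" "c2 = (\<chi> k. load J \<xi>2 k)" by auto
  define \<xi> where "\<xi> j = u * \<xi>1 j + v * \<xi>2 j" for j
  have "routing J lam mu \<xi>"
    unfolding routing_def
  proof (intro conjI allI ballI)
    fix i
    have "(\<Sum>j\<in>J. Rmat J mu i j * \<xi> j) = u * lam i + v * lam i"
      using \<xi> by (simp add: routing_def \<xi>_def algebra_simps sum.distrib flip: sum_distrib_left)
    then show "(\<Sum>j\<in>J. Rmat J mu i j * \<xi> j) = lam i"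
      using uv by (simp flip: distrib_right)
  next
    fix j assume "j \<in> J"
    then show "0 \<le> \<xi> j" using \<xi> uv by (simp add: routing_def \<xi>_def)
  qed
  moreover have "u *\<^sub>R c1 + v *\<^sub>R c2 = (\<chi> k. load J \<xi> k)"
    by (simp add: c vec_eq_iff load_def \<xi>_def algebra_simps sum.distrib sum_distrib_left)
  ultimately show "u *\<^sub>R c1 + v *\<^sub>R c2 \<in> (\<lambda>\<xi>. \<chi> k. load J \<xi> k) ` {\<xi>. routing J lam mu \<xi>}"
    by blast
qed

lemma lp_value_le_dual_objective:
  fixes J :: "('i::finite \<times> 'k::finite) set"
  assumes lam_pos: "\<And>i. 0 < lam i" and mu_pos: "\<And>j. j \<in> J \<Longrightarrow> 0 < mu j"
    and has_value: "lp_has_value J lam mu v" and opt: "dual_optimal J lam mu y z"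
  shows "v \<le> (\<Sum>i\<in>UNIV. y i * lam i)"
proof (rule field_le_epsilon)
  fix e :: real assume "0 < e"
  define levels where "levels = {\<rho>. \<exists>\<xi>. lp_feasible J lam mu \<xi> \<rho>}"
  have "levels \<noteq> {}" "bdd_below levels" "Inf levels = v"
    using has_value by (auto simp: lp_has_value_def lp_value_def levels_def)
  then obtain \<xi>0 where \<xi>0: "routing J lam mu \<xi>0" by (auto simp: levels_def lp_feasible_iff_routing)
  have above: "\<exists>k. v - e < c $ k" if c_in: "c \<in> (\<lambda>\<xi>. \<chi> k. load J \<xi> k) ` {\<xi>. routing J lam mu \<xi>}" for c
  proof (rule ccontr)
    assume "\<not> ?thesis"
    moreover obtain \<xi> where "routing J lam mu \<xi>" "c = (\<chi> k. load J \<xi> k)" using c_in by blast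
    ultimately have "v - e \<in> levels" by (auto simp: levels_def lp_feasible_iff_routing not_less)
    then have "v \<le> v - e" using cInf_lower[OF _ \<open>bdd_below levels\<close>] \<open>Inf levels = v\<close> by blast
    then show False using \<open>0 < e\<close> by simp
  qed
  have "(\<lambda>\<xi>. \<chi> k. load J \<xi> k) ` {\<xi>. routing J lam mu \<xi>} \<noteq> {}" using \<xi>0 by blast
  then obtain w where w: "\<And>k. 0 \<le> w k" "(\<Sum>k\<in>UNIV. w k) = 1"
    and w_above: "\<And>c. c \<in> (\<lambda>\<xi>. \<chi> k. load J \<xi> k) ` {\<xi>. routing J lam mu \<xi>}
                   \<Longrightarrow> v - e \<le> (\<Sum>k\<in>UNIV. w k * c $ k)"
    using minimax_convex_coordinates[OF convex_load_image _ above] by blast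
  have lam_nonneg: "0 \<le> lam i" for i using lam_pos[of i] by simp
  obtain y' \<xi> where "dual_feasible J mu y' w" "routing J lam mu \<xi>"
    and cost: "(\<Sum>k\<in>UNIV. w k * load J \<xi> k) = (\<Sum>i\<in>UNIV. y' i * lam i)"
    by (rule cheapest_routing[OF mu_pos lam_nonneg routing_serves[OF \<xi>0 lam_pos] w])
  then have "v - e \<le> (\<Sum>i\<in>UNIV. y' i * lam i)" using w_above[of "\<chi> k. load J \<xi> k"] by simp
  also have "\<dots> \<le> (\<Sum>i\<in>UNIV. y i * lam i)"
    using opt \<open>dual_feasible J mu y' w\<close> unfolding dual_optimal_def by blast
  finally show "v \<le> (\<Sum>i\<in>UNIV. y i * lam i) + e" by simp
qed

lemma Gamma1_minimal:
  assumes "0 \<le> t"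
    and decomposition: "\<And>s. s \<in> {0..t} \<Longrightarrow> F s = W s - Y s"
    and W_nonneg: "\<And>s. s \<in> {0..t} \<Longrightarrow> 0 \<le> W s"
    and Y_mono: "mono_on {0..t} Y" and Y0: "0 \<le> Y 0"
  shows "Gamma1 F t \<le> W t"
proof -
  have "(SUP s\<in>{0..t}. max 0 (- F s)) \<le> Y t"
  proof (rule cSUP_least)
    show "{0..t} \<noteq> {}" using \<open>0 \<le> t\<close> by simp
    fix s assume s: "s \<in> {0..t}"
    have "Y s \<le> Y t" "Y 0 \<le> Y t" using s \<open>0 \<le> t\<close> by (auto intro: mono_onD[OF Y_mono])
    then show "max 0 (- F s) \<le> Y t" using decomposition[OF s] W_nonneg[OF s] Y0 by simp
  qed
  then show ?thesis using decomposition[of t] \<open>0 \<le> t\<close> by (simp add: Gamma1_def)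
qed

definition regulator ::
  "('i::finite \<times> 'k) set \<Rightarrow> ('i \<Rightarrow> real) \<Rightarrow> ('i \<times> 'k \<Rightarrow> real) \<Rightarrow> ('i \<Rightarrow> real)
   \<Rightarrow> ('i \<times> 'k \<Rightarrow> real \<Rightarrow> real) \<Rightarrow> real \<Rightarrow> real" where
  "regulator J lam mu y \<tau> s = (\<Sum>i\<in>UNIV. y i * lam i) * s - (\<Sum>j\<in>J. y (fst j) * mu j * \<tau> j s)"

lemma regulator_mono:
  fixes J :: "('i::finite \<times> 'k::finite) set"
  assumes feasible: "dual_feasible J mu y z" and objective: "1 \<le> (\<Sum>i\<in>UNIV. y i * lam i)"
    and busy_mono: "\<And>j. j \<in> J \<Longrightarrow> mono_on {0..} (\<tau> j)"
    and idle_mono: "\<And>k. mono_on {0..} (\<lambda>s. s - load J (\<lambda>j. \<tau> j s) k)"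
  shows "mono_on {0..} (regulator J lam mu y \<tau>)"
proof (rule mono_onI)
  fix s t :: real assume "s \<in> {0..}" "t \<in> {0..}" "s \<le> t"
  define \<delta> where "\<delta> j = \<tau> j t - \<tau> j s" for j
  have \<delta>_nonneg: "0 \<le> \<delta> j" if "j \<in> J" for j
    using mono_onD[OF busy_mono[OF that]] \<open>s \<in> {0..}\<close> \<open>t \<in> {0..}\<close> \<open>s \<le> t\<close> by (simp add: \<delta>_def)
  have load_\<delta>: "load J \<delta> k \<le> t - s" for k
  proof -
    have "s - load J (\<lambda>j. \<tau> j s) k \<le> t - load J (\<lambda>j. \<tau> j t) k"
      using mono_onD[OF idle_mono] \<open>s \<in> {0..}\<close> \<open>t \<in> {0..}\<close> \<open>s \<le> t\<close> .
    moreover have "load J \<delta> k = load J (\<lambda>j. \<tau> j t) k - load J (\<lambda>j. \<tau> j s) k"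
      by (simp add: \<delta>_def load_def right_diff_distrib sum_subtractf)
    ultimately show ?thesis by linarith
  qed
  have z: "(\<Sum>k\<in>UNIV. z k) = 1" "\<And>k. 0 \<le> z k" "\<And>j. j \<in> J \<Longrightarrow> y (fst j) * mu j \<le> z (snd j)"
    using feasible by (auto simp: dual_feasible_iff)
  have "(\<Sum>j\<in>J. y (fst j) * mu j * \<delta> j) \<le> (\<Sum>j\<in>J. z (snd j) * \<delta> j)"
    by (rule sum_mono) (simp add: mult_right_mono z(3) \<delta>_nonneg)
  also have "\<dots> = (\<Sum>k\<in>UNIV. z k * load J \<delta> k)"
    by (simp add: weighted_load)
  also have "\<dots> \<le> (\<Sum>k\<in>UNIV. z k * (t - s))"
    by (rule sum_mono) (simp add: mult_left_mono load_\<delta> z(2))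
  also have "\<dots> = t - s" by (simp add: z(1) flip: sum_distrib_right)
  also have "\<dots> \<le> (\<Sum>i\<in>UNIV. y i * lam i) * (t - s)"
    using mult_right_mono[OF objective, of "t - s"] \<open>s \<le> t\<close> by simp
  finally show "regulator J lam mu y \<tau> s \<le> regulator J lam mu y \<tau> t"
    by (simp add: regulator_def \<delta>_def right_diff_distrib sum_subtractf algebra_simps)
qed

lemma sum_by_class:
  fixes J :: "('i::finite \<times> 'k) set" and y :: "'i \<Rightarrow> 'a::semiring_0"
  assumes "finite J"
  shows "(\<Sum>i\<in>UNIV. y i * (\<Sum>j\<in>{j\<in>J. fst j = i}. f j)) = (\<Sum>j\<in>J. y (fst j) * f j)"
proof -
  have "(\<Sum>i\<in>UNIV. y i * (\<Sum>j\<in>{j\<in>J. fst j = i}. f j))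
      = (\<Sum>i\<in>UNIV. \<Sum>j\<in>{j\<in>J. fst j = i}. y (fst j) * f j)"
    unfolding sum_distrib_left by (intro sum.cong refl) auto
  also have "\<dots> = (\<Sum>j\<in>J. y (fst j) * f j)"
    using assms by (rule sum.group) auto
  finally show ?thesis .
qed

lemma class_balance_centred:
  assumes "0 < n"
  shows "Ahat n Ac lamn i s \<omega> - (\<Sum>j\<in>{j\<in>J. fst j = i}. Shat n Sc mun j (T j s \<omega>) \<omega>)
           + ratehat n (lamn i) (lam i) * s - (\<Sum>j\<in>{j\<in>J. fst j = i}. ratehat n (mun j) (mu j) * T j s \<omega>)
         = Xhat n J Ac Sc lamn mun T i s \<omega>
           - sqrt n * (lam i * s - (\<Sum>j\<in>{j\<in>J. fst j = i}. mu j * T j s \<omega>))"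
proof -
  have sqrt_n: "real n = sqrt n * sqrt n" "0 < sqrt n" using assms by simp_all
  have service: "Shat n Sc mun j (T j s \<omega>) \<omega> + ratehat n (mun j) (mu j) * T j s \<omega>
      = Dn Sc mun T j s \<omega> / sqrt n - sqrt n * (mu j * T j s \<omega>)" for j
    using sqrt_n by (simp add: Shat_def ratehat_def Dn_def field_simps)
  have "(\<Sum>j\<in>{j\<in>J. fst j = i}. Shat n Sc mun j (T j s \<omega>) \<omega>)
        + (\<Sum>j\<in>{j\<in>J. fst j = i}. ratehat n (mun j) (mu j) * T j s \<omega>)
      = (\<Sum>j\<in>{j\<in>J. fst j = i}. Dn Sc mun T j s \<omega>) / sqrt n
        - sqrt n * (\<Sum>j\<in>{j\<in>J. fst j = i}. mu j * T j s \<omega>)"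
    by (simp add: service sum_subtractf sum_divide_distrib sum_distrib_left flip: sum.distrib)
  moreover have "Ahat n Ac lamn i s \<omega> + ratehat n (lamn i) (lam i) * s
      = An Ac lamn i s \<omega> / sqrt n - sqrt n * (lam i * s)"
    using sqrt_n by (simp add: Ahat_def ratehat_def field_simps)
  ultimately show ?thesis
    by (simp add: Xhat_def Xn_def diff_divide_distrib right_diff_distrib)
qed

lemma Fhat_eq_What_minus_regulator:
  fixes J :: "('i::finite \<times> 'k::finite) set"
  assumes "0 < n"
  shows "Fhat n y J lam mu Ac Sc lamn mun T s \<omega>
       = What n y J Ac Sc lamn mun T s \<omega> - sqrt n * regulator J lam mu y (\<lambda>j s. T j s \<omega>) s"
proof -
  have "Fhat n y J lam mu Ac Sc lamn mun T s \<omega>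
      = (\<Sum>i\<in>UNIV. y i * Xhat n J Ac Sc lamn mun T i s \<omega>)
        - sqrt n * ((\<Sum>i\<in>UNIV. y i * lam i) * s
                    - (\<Sum>i\<in>UNIV. y i * (\<Sum>j\<in>{j\<in>J. fst j = i}. mu j * T j s \<omega>)))"
    unfolding Fhat_def class_balance_centred[OF assms]
    by (simp add: algebra_simps sum.distrib sum_subtractf sum_distrib_left sum_distrib_right)
  also have "\<dots> = What n y J Ac Sc lamn mun T s \<omega> - sqrt n * regulator J lam mu y (\<lambda>j s. T j s \<omega>) s"
    by (simp add: What_def regulator_def sum_by_class mult.assoc)
  finally show ?thesis .
qed

lemma What_nonneg:
  assumes "\<And>i. 0 \<le> y i" and "\<And>i. 0 \<le> Xn J Ac Sc lamn mun T i s \<omega>"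
  shows "0 \<le> What n y J Ac Sc lamn mun T s \<omega>"
  unfolding What_def Xhat_def using assms by (intro sum_nonneg mult_nonneg_nonneg divide_nonneg_nonneg) auto

theorem lemma4p1:
  fixes M :: "'a measure"
    and J :: "('i::finite \<times> 'k::finite) set"
    and lam :: "'i \<Rightarrow> real" and mu :: "'i \<times> 'k \<Rightarrow> real"
    and ystar :: "'i \<Rightarrow> real" and zstar :: "'k \<Rightarrow> real"
    and lamN :: "nat \<Rightarrow> 'i \<Rightarrow> real" and muN :: "nat \<Rightarrow> 'i \<times> 'k \<Rightarrow> real"
    and lamhat :: "'i \<Rightarrow> real" and muhat :: "'i \<times> 'k \<Rightarrow> real"
    and Ac :: "'i \<Rightarrow> real \<Rightarrow> 'a \<Rightarrow> real" and Sc :: "'i \<times> 'k \<Rightarrow> real \<Rightarrow> 'a \<Rightarrow> real"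
    and uA :: "'i \<Rightarrow> nat \<Rightarrow> 'a \<Rightarrow> real" and uS :: "'i \<times> 'k \<Rightarrow> nat \<Rightarrow> 'a \<Rightarrow> real"
    and Ups :: "'a \<Rightarrow> 'u::polish_space"
    and n :: nat
    and T :: "'i \<times> 'k \<Rightarrow> real \<Rightarrow> 'a \<Rightarrow> real"
    and t :: real
  assumes lam_pos: "\<And>i. 0 < lam i"
    and mu_pos: "\<And>j. j \<in> J \<Longrightarrow> 0 < mu j"
    and standing: "standing_assumption J lam mu"
    and dual_opt: "dual_optimal J lam mu ystar zstar"
    and lamN_pos: "\<And>m i. 0 < lamN m i"
    and muN_pos: "\<And>m j. j \<in> J \<Longrightarrow> 0 < muN m j"
    and lamN_lim: "\<And>i. (\<lambda>m. ratehat m (lamN m i) (lam i)) \<longlonglongrightarrow> lamhat i"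
    and muN_lim: "\<And>j. j \<in> J \<Longrightarrow> (\<lambda>m. ratehat m (muN m j) (mu j)) \<longlonglongrightarrow> muhat j"
    and prob: "prob_space M"
    and A_meas: "\<And>i s. Ac i s \<in> borel_measurable M"
    and S_meas: "\<And>j s. j \<in> J \<Longrightarrow> Sc j s \<in> borel_measurable M"
    and Ups_meas: "Ups \<in> borel_measurable M"
    and A_renewal: "\<And>i. renewal_process M (Ac i) (uA i)"
    and S_renewal: "\<And>j. j \<in> J \<Longrightarrow> renewal_process M (Sc j) (uS j)"
    and scvA_pos: "\<And>i. 0 < scv M (uA i 1)"
    and indep: "prob_space.indep_sets M (source_events M Ac Sc Ups)
                  (range ArrSrc \<union> SrvSrc ` J \<union> {UpsSrc})"
    and n_pos: "1 \<le> n"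
    and adm: "admissible M J Ac Sc Ups (lamN n) (muN n) T"
    and t_nonneg: "0 \<le> t"
  shows "\<forall>\<omega>\<in>space M.
           What n ystar J Ac Sc (lamN n) (muN n) T t \<omega>
           \<ge> Gamma1 (\<lambda>s. Fhat n ystar J lam mu Ac Sc (lamN n) (muN n) T s \<omega>) t"
proof
  fix \<omega> assume "\<omega> \<in> space M"
  then have path: "\<And>j. j \<in> J \<Longrightarrow> T j 0 \<omega> = 0" "\<And>j. j \<in> J \<Longrightarrow> mono_on {0..} (\<lambda>s. T j s \<omega>)"
      "\<And>i s. 0 \<le> s \<Longrightarrow> 0 \<le> Xn J Ac Sc (lamN n) (muN n) T i s \<omega>"
      "\<And>k. mono_on {0..} (\<lambda>s. In J T k s \<omega>)"
    using adm unfolding admissible_def by auto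
  have objective: "1 \<le> (\<Sum>i\<in>UNIV. ystar i * lam i)"
    using lp_value_le_dual_objective[OF lam_pos mu_pos _ dual_opt] standing
    unfolding standing_assumption_def by blast
  have feasible: "dual_feasible J mu ystar zstar" using dual_opt by (simp add: dual_optimal_def)
  let ?Y = "regulator J lam mu ystar (\<lambda>j s. T j s \<omega>)"
  have Y_mono: "mono_on {0..} ?Y"
    using path(2,4) by (intro regulator_mono[OF feasible objective]) (simp_all add: In_def load_def)
  show "What n ystar J Ac Sc (lamN n) (muN n) T t \<omega>
      \<ge> Gamma1 (\<lambda>s. Fhat n ystar J lam mu Ac Sc (lamN n) (muN n) T s \<omega>) t"
  proof (rule Gamma1_minimal[where Y = "\<lambda>s. sqrt n * ?Y s"])
    show "Fhat n ystar J lam mu Ac Sc (lamN n) (muN n) T s \<omega>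
        = What n ystar J Ac Sc (lamN n) (muN n) T s \<omega> - sqrt n * ?Y s" for s
      using n_pos by (intro Fhat_eq_What_minus_regulator) simp
    show "0 \<le> What n ystar J Ac Sc (lamN n) (muN n) T s \<omega>" if "s \<in> {0..t}" for s
      using dual_optimal_nonneg[OF lam_pos dual_opt] path(3) that by (intro What_nonneg) auto
    show "mono_on {0..t} (\<lambda>s. sqrt n * ?Y s)"
      by (intro mono_onI mult_left_mono mono_onD[OF Y_mono]) auto
    show "0 \<le> sqrt n * ?Y 0" using path(1) by (simp add: regulator_def)
  qed (rule t_nonneg)
qed

end
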